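(* Let $M,N\ge1$ be integers, let $L$ be a common divisor of $M$ and $N$, and let $T=\mathrm{lcm}(M,N)$. The group $H_{M,N,L}$ has exponent $T$ if $T$ is odd or $T/L$ is even, and exponent $2T$ otherwise. In particular $H_{N,N,N}$, for $N$ odd, and $H_{N,N,N/2}$, for $N$ even, have exponent $N$.
   Context: The Heisenberg group over $\mathbb{Z}$ is the group of $3\times3$ unipotent upper triangular integer matrices; it is generated by $x=\begin{pmatrix}1&1&0\\0&1&0\\0&0&1\end{pmatrix}$, $y=\begin{pmatrix}1&0&0\\0&1&1\\0&0&1\end{pmatrix}$, with $z=xyx^{-1}y^{-1}=\begin{pmatrix}1&0&1\\0&1&0\\0&0&1\end{pmatrix}$ central. For $M,N\ge1$ and $L$ a common divisor of $M$ and $N$, $H_{M,N,L}$ is the group generated by $x,y$ subject to the relations $xz=zx$, $yz=zy$, $z=xyx^{-1}y^{-1}$, $x^N=y^M=z^L=1$; it has order $MNL$. *)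

theory Defs
  imports "HOL-Algebra.Algebra"
begin

text \<open>The finitely presented group H_{M,N,L}: words in the generators x, y and their
inverses, modulo the congruence generated by free cancellation and the defining relators
(with z := x y x^-1 y^-1).\<close>

datatype gen = GX | GY

type_synonym hword = "(gen \<times> bool) list"   \<comment> \<open>(generator, is_inverse)\<close>

definition inv_letter :: "gen \<times> bool \<Rightarrow> gen \<times> bool" where
  "inv_letter a = (fst a, \<not> snd a)"

definition wx :: hword where "wx = [(GX, False)]"
definition wy :: hword where "wy = [(GY, False)]"
definition wxi :: hword where "wxi = [(GX, True)]"
definition wyi :: hword where "wyi = [(GY, True)]"
definition wz :: hword where "wz = wx @ wy @ wxi @ wyi"
definition wzi :: hword where "wzi = wy @ wx @ wyi @ wxi"

definition wpow :: "hword \<Rightarrow> nat \<Rightarrow> hword" where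
  "wpow w n = concat (replicate n w)"

definition heis_relators :: "nat \<Rightarrow> nat \<Rightarrow> nat \<Rightarrow> hword set" where
  "heis_relators M N L =
     {wx @ wz @ wxi @ wzi, wy @ wz @ wyi @ wzi, wpow wx N, wpow wy M, wpow wz L}"

inductive heis_eq :: "nat \<Rightarrow> nat \<Rightarrow> nat \<Rightarrow> hword \<Rightarrow> hword \<Rightarrow> bool"
  for M N L :: nat where
  refl: "heis_eq M N L u u"
| sym: "heis_eq M N L u v \<Longrightarrow> heis_eq M N L v u"
| trans: "heis_eq M N L u v \<Longrightarrow> heis_eq M N L v w \<Longrightarrow> heis_eq M N L u w"
| cancel: "heis_eq M N L (u @ [a, inv_letter a] @ v) (u @ v)"
| relator: "r \<in> heis_relators M N L \<Longrightarrow> heis_eq M N L (u @ r @ v) (u @ v)"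

definition heis_class :: "nat \<Rightarrow> nat \<Rightarrow> nat \<Rightarrow> hword \<Rightarrow> hword set" where
  "heis_class M N L w = {v. heis_eq M N L w v}"

definition heis_group :: "nat \<Rightarrow> nat \<Rightarrow> nat \<Rightarrow> hword set monoid" where
  "heis_group M N L = \<lparr> carrier = range (heis_class M N L),
              monoid.mult = (\<lambda>A B. \<Union>a\<in>A. \<Union>b\<in>B. heis_class M N L (a @ b)),
              monoid.one = heis_class M N L [] \<rparr>"

definition exponent :: "('a, 'b) monoid_scheme \<Rightarrow> nat" where
  "exponent G = (LEAST n. 0 < n \<and> (\<forall>g\<in>carrier G. g [^]\<^bsub>G\<^esub> n = \<one>\<^bsub>G\<^esub>))"

end

theory Submission
  imports Defs "HOL-Number_Theory.Cong"
begin

text \<open>Every word in x and y is equivalent to a normal form z^c y^b x^a, and evaluating words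
in the integer Heisenberg group, (a,b,c) (a',b',c') = (a+a', b+b', c+c'+ab'), identifies
H_{M,N,L} with the triples taken modulo (N, M, L). Since (a,b,c)^n = (na, nb, nc + ab C(n,2)),
all n-th powers are trivial iff lcm(M,N) divides n and L divides C(n,2). For T = lcm(M,N) the
latter holds at n = T exactly when T is odd or T/L is even, and it always holds at n = 2T.\<close>

declare heis_eq.trans [trans]

definition inv_word :: "hword \<Rightarrow> hword" where
  "inv_word w = rev (map inv_letter w)"

lemma inv_letter_inv_letter [simp]: "inv_letter (inv_letter a) = a"
  by (simp add: inv_letter_def)

lemma inv_word_inv_word [simp]: "inv_word (inv_word w) = w"
  by (simp add: inv_word_def rev_map comp_def)

lemma wpow_0 [simp]: "wpow w 0 = []"
  by (simp add: wpow_def)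

lemma wpow_Suc: "wpow w (Suc n) = w @ wpow w n"
  by (simp add: wpow_def)

lemma wpow_Suc_right: "wpow w (Suc n) = wpow w n @ w"
  by (simp add: wpow_def replicate_append_same[symmetric] del: replicate_append_same)

lemma wpow_add: "wpow w (m + n) = wpow w m @ wpow w n"
  by (simp add: wpow_def replicate_add)

lemma wpow_mult: "wpow w (m * n) = wpow (wpow w m) n"
  by (induction n) (simp_all add: wpow_Suc wpow_add)

lemmas generator_word_defs = wx_def wy_def wxi_def wyi_def wz_def wzi_def

definition normal_word :: "nat \<Rightarrow> nat \<Rightarrow> nat \<Rightarrow> hword" where
  "normal_word a b c = wpow wz c @ wpow wy b @ wpow wx a"

lemma normal_word_append_xpow: "normal_word a b c @ wpow wx k = normal_word (a + k) b c"
  by (simp add: normal_word_def wpow_add)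

section \<open>Evaluation in the integer Heisenberg group\<close>

text \<open>The triple (a, b, c) stands for the integer matrix [[1, a, c], [0, 1, b], [0, 0, 1]];
x, y and z become (1, 0, 0), (0, 1, 0) and (0, 0, 1).\<close>

fun heis_mult :: "int \<times> int \<times> int \<Rightarrow> int \<times> int \<times> int \<Rightarrow> int \<times> int \<times> int" where
  "heis_mult (a, b, c) (a', b', c') = (a + a', b + b', c + c' + a * b')"

lemma heis_mult_assoc: "heis_mult (heis_mult p q) r = heis_mult p (heis_mult q r)"
  by (cases p; cases q; cases r) (simp add: algebra_simps)

lemma heis_mult_0_left [simp]: "heis_mult (0, 0, 0) p = p"
  by (cases p) simp

fun letter_eval :: "gen \<times> bool \<Rightarrow> int \<times> int \<times> int" where
  "letter_eval (GX, False) = (1, 0, 0)"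
| "letter_eval (GX, True) = (-1, 0, 0)"
| "letter_eval (GY, False) = (0, 1, 0)"
| "letter_eval (GY, True) = (0, -1, 0)"

lemma letter_eval_cancel:
  "heis_mult (letter_eval a) (heis_mult (letter_eval (inv_letter a)) p) = p"
  by (cases a rule: letter_eval.cases; cases p) (simp_all add: inv_letter_def)

fun word_eval :: "hword \<Rightarrow> int \<times> int \<times> int" where
  "word_eval [] = (0, 0, 0)"
| "word_eval (a # w) = heis_mult (letter_eval a) (word_eval w)"

lemma word_eval_append: "word_eval (u @ v) = heis_mult (word_eval u) (word_eval v)"
  by (induction u) (simp_all add: heis_mult_assoc)

lemma word_eval_wpow:
  assumes "word_eval w = (a, b, c)"
  shows "word_eval (wpow w n) = (int n * a, int n * b, int n * c + int (n choose 2) * a * b)"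
proof (induction n)
  case 0
  show ?case by simp
next
  case (Suc n)
  have "Suc n choose 2 = (n choose 2) + n"
    by (simp add: numeral_2_eq_2)
  with Suc show ?case
    by (simp add: wpow_Suc word_eval_append assms algebra_simps)
qed

lemma word_eval_normal_word: "word_eval (normal_word a b c) = (int a, int b, int c)"
  by (simp add: normal_word_def word_eval_append word_eval_wpow generator_word_defs)

fun heis_cong :: "nat \<Rightarrow> nat \<Rightarrow> nat \<Rightarrow> int \<times> int \<times> int \<Rightarrow> int \<times> int \<times> int \<Rightarrow> bool" where
  "heis_cong M N L (a, b, c) (a', b', c') \<longleftrightarrow>
     [a = a'] (mod int N) \<and> [b = b'] (mod int M) \<and> [c = c'] (mod int L)"

lemma heis_cong_refl [simp]: "heis_cong M N L p p"
  by (cases p) simp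

lemma heis_cong_sym: "heis_cong M N L p q \<Longrightarrow> heis_cong M N L q p"
  by (cases p; cases q) (simp add: cong_sym)

lemma heis_cong_trans: "heis_cong M N L p q \<Longrightarrow> heis_cong M N L q r \<Longrightarrow> heis_cong M N L p r"
  by (cases p; cases q; cases r) (auto elim: cong_trans)

lemma heis_cong_mult:
  assumes "L dvd M" "L dvd N" "heis_cong M N L p p'" "heis_cong M N L q q'"
  shows "heis_cong M N L (heis_mult p q) (heis_mult p' q')"
proof -
  obtain a b c a' b' c' where p: "p = (a, b, c)" "p' = (a', b', c')"
    by (cases p; cases p')
  obtain d e f d' e' f' where q: "q = (d, e, f)" "q' = (d', e', f')"
    by (cases q; cases q')
  have "[a = a'] (mod int L)" "[e = e'] (mod int L)"
    using assms by (auto simp: p q intro: cong_dvd_modulus)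
  then have "[c + f + a * e = c' + f' + a' * e'] (mod int L)"
    using assms(3,4) by (auto simp: p q intro: cong_add cong_mult)
  with assms(3,4) show ?thesis
    by (simp add: p q cong_add)
qed

lemma all_wpow_heis_cong_0_iff:
  assumes "L dvd N"
  shows "(\<forall>w. heis_cong M N L (word_eval (wpow w n)) (0, 0, 0))
    \<longleftrightarrow> lcm M N dvd n \<and> L dvd n choose 2"
proof
  assume all: "\<forall>w. heis_cong M N L (word_eval (wpow w n)) (0, 0, 0)"
  have "N dvd n"
    using all[rule_format, of wx] by (simp add: word_eval_wpow wx_def cong_0_iff)
  moreover have "M dvd n"
    using all[rule_format, of wy] by (simp add: word_eval_wpow wy_def cong_0_iff)
  moreover have "int L dvd int n + int (n choose 2)"
    using all[rule_format, of "wx @ wy"]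
    by (simp add: word_eval_wpow word_eval_append wx_def wy_def cong_0_iff)
  moreover have "int L dvd int n"
    using \<open>N dvd n\<close> assms by (simp add: dvd_trans)
  ultimately show "lcm M N dvd n \<and> L dvd n choose 2"
    by (simp add: dvd_add_right_iff)
next
  assume "lcm M N dvd n \<and> L dvd n choose 2"
  then have dvd: "int N dvd int n" "int M dvd int n" "int L dvd int n" "int L dvd int (n choose 2)"
    using assms by (auto intro: dvd_trans)
  show "\<forall>w. heis_cong M N L (word_eval (wpow w n)) (0, 0, 0)"
  proof
    fix w
    obtain a b c where w: "word_eval w = (a, b, c)"
      by (cases "word_eval w")
    from dvd have "int L dvd int n * c + int (n choose 2) * a * b"
      by (simp add: mult.assoc)
    with dvd show "heis_cong M N L (word_eval (wpow w n)) (0, 0, 0)"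
      by (simp add: word_eval_wpow[OF w] cong_0_iff)
  qed
qed

section \<open>Normal forms and faithfulness of the evaluation\<close>

context
  fixes M N L :: nat
begin

abbreviation word_equiv :: "hword \<Rightarrow> hword \<Rightarrow> bool" (infix "\<doteq>" 50)
  where "u \<doteq> v \<equiv> heis_eq M N L u v"

lemma heis_eq_context:
  assumes "u \<doteq> v"
  shows "p @ u @ q \<doteq> p @ v @ q"
  using assms
proof (induction arbitrary: p q rule: heis_eq.induct)
  case (cancel u a v)
  show ?case using heis_eq.cancel[of M N L "p @ u" a "v @ q"] by simp
next
  case (relator r u v)
  show ?case using heis_eq.relator[OF relator, of "p @ u" "v @ q"] by simp
qed (blast intro: heis_eq.intros)+

lemma heis_eq_append: "u \<doteq> u' \<Longrightarrow> v \<doteq> v' \<Longrightarrow> u @ v \<doteq> u' @ v'"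
  using heis_eq_context[of u u' "[]" v] heis_eq_context[of v v' u' "[]"]
  by (auto intro: heis_eq.trans)

lemma heis_eq_relator_Nil: "r \<in> heis_relators M N L \<Longrightarrow> r \<doteq> []"
  using heis_eq.relator[of r M N L "[]" "[]"] by simp

lemma heis_eq_cancel_Cons: "a # inv_letter a # v \<doteq> v"
  using heis_eq.cancel[of M N L "[]" a v] by simp

lemma append_inv_word: "w @ inv_word w \<doteq> []"
proof (induction w)
  case Nil
  show ?case by (simp add: inv_word_def heis_eq.refl)
next
  case (Cons a w)
  have "(a # w) @ inv_word (a # w) = [a] @ (w @ inv_word w) @ [inv_letter a]"
    by (simp add: inv_word_def)
  also have "\<dots> \<doteq> [a] @ [] @ [inv_letter a]"
    using Cons by (rule heis_eq_context)
  also have "\<dots> \<doteq> []"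
    using heis_eq_cancel_Cons[of a "[]"] by simp
  finally show ?case .
qed

lemma inv_word_append: "inv_word w @ w \<doteq> []"
  using append_inv_word[of "inv_word w"] by simp

lemma commute_if_commutator_equiv_Nil:
  assumes "a @ b @ inv_word a @ inv_word b \<doteq> []"
  shows "b @ a \<doteq> a @ b"
proof -
  have "b @ a \<doteq> (a @ b @ inv_word a @ inv_word b) @ b @ a"
    using heis_eq_append[OF heis_eq.sym[OF assms] heis_eq.refl] by simp
  also have "\<dots> = (a @ b @ inv_word a) @ (inv_word b @ b) @ a"
    by simp
  also have "\<dots> \<doteq> (a @ b @ inv_word a) @ [] @ a"
    using inv_word_append by (rule heis_eq_context)
  also have "\<dots> = (a @ b) @ (inv_word a @ a) @ []"
    by simp
  also have "\<dots> \<doteq> (a @ b) @ [] @ []"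
    using inv_word_append by (rule heis_eq_context)
  finally show ?thesis by simp
qed

lemma wpow_commute:
  assumes "a @ b \<doteq> b @ a"
  shows "wpow a m @ b \<doteq> b @ wpow a m"
proof (induction m)
  case 0
  show ?case by (simp add: heis_eq.refl)
next
  case (Suc m)
  have "wpow a (Suc m) @ b = a @ (wpow a m @ b)"
    by (simp add: wpow_Suc)
  also have "\<dots> \<doteq> a @ (b @ wpow a m)"
    using heis_eq.refl Suc by (rule heis_eq_append)
  also have "\<dots> = (a @ b) @ wpow a m"
    by simp
  also have "\<dots> \<doteq> (b @ a) @ wpow a m"
    using assms heis_eq.refl by (rule heis_eq_append)
  finally show ?case by (simp add: wpow_Suc)
qed

lemma wpow_wpow_commute:
  assumes "a @ b \<doteq> b @ a"
  shows "wpow a m @ wpow b n \<doteq> wpow b n @ wpow a m"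
  using assms by (meson heis_eq.sym wpow_commute)

lemma z_x_commute: "wz @ wx \<doteq> wx @ wz"
proof (rule commute_if_commutator_equiv_Nil)
  have "wx @ wz @ inv_word wx @ inv_word wz \<in> heis_relators M N L"
    by (simp add: heis_relators_def inv_word_def inv_letter_def generator_word_defs)
  then show "wx @ wz @ inv_word wx @ inv_word wz \<doteq> []"
    by (rule heis_eq_relator_Nil)
qed

lemma z_y_commute: "wz @ wy \<doteq> wy @ wz"
proof (rule commute_if_commutator_equiv_Nil)
  have "wy @ wz @ inv_word wy @ inv_word wz \<in> heis_relators M N L"
    by (simp add: heis_relators_def inv_word_def inv_letter_def generator_word_defs)
  then show "wy @ wz @ inv_word wy @ inv_word wz \<doteq> []"
    by (rule heis_eq_relator_Nil)
qed

lemma z_y_x_equiv_x_y: "wz @ wy @ wx \<doteq> wx @ wy"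
proof -
  have "wz @ wy @ wx = [(GX, False), (GY, False), (GX, True)] @ (GY, True) # inv_letter (GY, True) # wx"
    by (simp add: generator_word_defs inv_letter_def)
  also have "\<dots> \<doteq> [(GX, False), (GY, False), (GX, True)] @ wx"
    using heis_eq.refl heis_eq_cancel_Cons by (rule heis_eq_append)
  also have "\<dots> = [(GX, False), (GY, False)] @ (GX, True) # inv_letter (GX, True) # []"
    by (simp add: wx_def inv_letter_def)
  also have "\<dots> \<doteq> [(GX, False), (GY, False)] @ []"
    using heis_eq.refl heis_eq_cancel_Cons by (rule heis_eq_append)
  finally show ?thesis by (simp add: wx_def wy_def)
qed

lemma xpow_y_equiv: "wpow wx a @ wy \<doteq> wpow wz a @ wy @ wpow wx a"
proof (induction a)
  case 0
  show ?case by (simp add: heis_eq.refl)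
next
  case (Suc a)
  have "wpow wx (Suc a) @ wy = wx @ (wpow wx a @ wy)"
    by (simp add: wpow_Suc)
  also have "\<dots> \<doteq> wx @ (wpow wz a @ wy @ wpow wx a)"
    using heis_eq.refl Suc by (rule heis_eq_append)
  also have "\<dots> = (wx @ wpow wz a) @ wy @ wpow wx a"
    by simp
  also have "\<dots> \<doteq> (wpow wz a @ wx) @ wy @ wpow wx a"
    using heis_eq.sym[OF wpow_commute[OF z_x_commute]] heis_eq.refl by (rule heis_eq_append)
  also have "\<dots> = wpow wz a @ (wx @ wy) @ wpow wx a"
    by simp
  also have "\<dots> \<doteq> wpow wz a @ (wz @ wy @ wx) @ wpow wx a"
    using heis_eq.sym[OF z_y_x_equiv_x_y] by (rule heis_eq_context)
  also have "\<dots> = wpow wz (Suc a) @ wy @ wpow wx (Suc a)"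
    by (simp only: wpow_Suc_right[of wz] wpow_Suc[of wx] append_assoc)
  finally show ?case .
qed

lemma normal_word_append_y: "normal_word a b c @ wy \<doteq> normal_word a (Suc b) (c + a)"
proof -
  have "normal_word a b c @ wy = (wpow wz c @ wpow wy b) @ (wpow wx a @ wy)"
    by (simp add: normal_word_def)
  also have "\<dots> \<doteq> (wpow wz c @ wpow wy b) @ (wpow wz a @ wy @ wpow wx a)"
    using heis_eq.refl xpow_y_equiv by (rule heis_eq_append)
  also have "\<dots> = wpow wz c @ (wpow wy b @ wpow wz a) @ wy @ wpow wx a"
    by simp
  also have "\<dots> \<doteq> wpow wz c @ (wpow wz a @ wpow wy b) @ wy @ wpow wx a"
    using heis_eq.sym[OF wpow_wpow_commute[OF z_y_commute]] by (rule heis_eq_context)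
  also have "\<dots> = normal_word a (Suc b) (c + a)"
    by (simp add: normal_word_def wpow_add wpow_Suc_right)
  finally show ?thesis .
qed

lemma normal_word_append_ypow:
  "normal_word a b c @ wpow wy k \<doteq> normal_word a (b + k) (c + k * a)"
proof (induction k)
  case 0
  show ?case by (simp add: heis_eq.refl)
next
  case (Suc k)
  have "normal_word a b c @ wpow wy (Suc k) = (normal_word a b c @ wpow wy k) @ wy"
    by (simp add: wpow_Suc_right)
  also have "\<dots> \<doteq> normal_word a (b + k) (c + k * a) @ wy"
    using Suc heis_eq.refl by (rule heis_eq_append)
  also have "\<dots> \<doteq> normal_word a (b + Suc k) (c + Suc k * a)"
    using normal_word_append_y[of a "b + k" "c + k * a"] by (simp add: algebra_simps)
  finally show ?case .
qed

lemma inverse_letter_equiv_pow: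
  assumes "wpow [(g, False)] n \<doteq> []" "n \<ge> 1"
  shows "[(g, True)] \<doteq> wpow [(g, False)] (n - 1)"
proof -
  have "[(g, True)] \<doteq> [(g, True)] @ wpow [(g, False)] n"
    using heis_eq.sym[OF heis_eq_append[OF heis_eq.refl[of M N L "[(g, True)]"] assms(1)]] by simp
  also have "\<dots> = (g, True) # inv_letter (g, True) # wpow [(g, False)] (n - 1)"
    using assms(2) by (cases n) (simp_all add: inv_letter_def wpow_Suc)
  also have "\<dots> \<doteq> wpow [(g, False)] (n - 1)"
    by (rule heis_eq_cancel_Cons)
  finally show ?thesis .
qed

lemma normal_word_append_letter:
  assumes "M \<ge> 1" "N \<ge> 1"
  shows "\<exists>a' b' c'. normal_word a b c @ [l] \<doteq> normal_word a' b' c'"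
proof -
  have x: "wpow [(GX, False)] N \<doteq> []" and y: "wpow [(GY, False)] M \<doteq> []"
    by (simp_all add: heis_eq_relator_Nil heis_relators_def generator_word_defs)
  obtain g i where l: "l = (g, i)"
    by fastforce
  show ?thesis
  proof (cases g; cases i)
    assume "g = GX" "\<not> i"
    then have "normal_word a b c @ [l] = normal_word (a + 1) b c"
      using normal_word_append_xpow[of a b c 1] by (simp add: l wx_def wpow_Suc)
    then show ?thesis by (metis heis_eq.refl)
  next
    assume "g = GX" "i"
    then have "normal_word a b c @ [l] \<doteq> normal_word a b c @ wpow wx (N - 1)"
      using heis_eq_append[OF heis_eq.refl inverse_letter_equiv_pow[OF x assms(2)]]
      by (simp add: l wx_def)
    then show ?thesis by (metis normal_word_append_xpow)
  next
    assume "g = GY" "\<not> i"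
    then have "normal_word a b c @ [l] = normal_word a b c @ wy"
      by (simp add: l wy_def)
    with normal_word_append_y show ?thesis by metis
  next
    assume "g = GY" "i"
    then have "normal_word a b c @ [l] \<doteq> normal_word a b c @ wpow wy (M - 1)"
      using heis_eq_append[OF heis_eq.refl inverse_letter_equiv_pow[OF y assms(1)]]
      by (simp add: l wy_def)
    then show ?thesis by (meson normal_word_append_ypow heis_eq.trans)
  qed
qed

lemma exists_normal_word:
  assumes "M \<ge> 1" "N \<ge> 1"
  shows "\<exists>a b c. w \<doteq> normal_word a b c"
proof (induction w rule: rev_induct)
  case Nil
  have "[] = normal_word 0 0 0"
    by (simp add: normal_word_def)
  then show ?case by (metis heis_eq.refl)
next
  case (snoc l w)
  then obtain a b c where "w \<doteq> normal_word a b c"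
    by blast
  then have "w @ [l] \<doteq> normal_word a b c @ [l]"
    using heis_eq.refl by (rule heis_eq_append)
  with normal_word_append_letter[OF assms] show ?case
    by (meson heis_eq.trans)
qed

lemma wpow_equiv_wpow_mod:
  assumes "wpow w n \<doteq> []"
  shows "wpow w m \<doteq> wpow w (m mod n)"
proof -
  have "wpow (wpow w n) k \<doteq> []" for k
  proof (induction k)
    case 0
    show ?case by (simp add: heis_eq.refl)
  next
    case (Suc k)
    show ?case using heis_eq_append[OF assms Suc] by (simp add: wpow_Suc)
  qed
  then have "wpow (wpow w n) (m div n) @ wpow w (m mod n) \<doteq> [] @ wpow w (m mod n)"
    using heis_eq.refl by (rule heis_eq_append)
  then show ?thesis
    by (metis append_Nil div_mult_mod_eq mult.commute wpow_add wpow_mult)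
qed

lemma normal_word_equiv_mod: "normal_word a b c \<doteq> normal_word (a mod N) (b mod M) (c mod L)"
  unfolding normal_word_def
  by (intro heis_eq_append wpow_equiv_wpow_mod) (simp_all add: heis_eq_relator_Nil heis_relators_def)

lemma word_eval_relator:
  "r \<in> heis_relators M N L \<Longrightarrow> heis_cong M N L (word_eval r) (0, 0, 0)"
  by (auto simp: heis_relators_def word_eval_append word_eval_wpow generator_word_defs cong_0_iff)

lemma heis_eq_imp_heis_cong:
  assumes "L dvd M" "L dvd N" "u \<doteq> v"
  shows "heis_cong M N L (word_eval u) (word_eval v)"
  using assms(3)
proof (induction rule: heis_eq.induct)
  case (cancel u a v)
  show ?case by (simp add: word_eval_append letter_eval_cancel)
next
  case (relator r u v)
  have "heis_cong M N L (heis_mult (word_eval u) (heis_mult (word_eval r) (word_eval v)))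
      (heis_mult (word_eval u) (heis_mult (0, 0, 0) (word_eval v)))"
    using heis_cong_mult[OF assms(1,2) heis_cong_refl
        heis_cong_mult[OF assms(1,2) word_eval_relator[OF relator] heis_cong_refl]] .
  then show ?case by (simp add: word_eval_append)
qed (auto intro: heis_cong_sym heis_cong_trans)

lemma heis_cong_imp_heis_eq:
  assumes "M \<ge> 1" "N \<ge> 1" "L dvd M" "L dvd N"
    and "heis_cong M N L (word_eval u) (word_eval v)"
  shows "u \<doteq> v"
proof -
  obtain a b c where u: "u \<doteq> normal_word a b c"
    using exists_normal_word[OF assms(1,2)] by blast
  obtain a' b' c' where v: "v \<doteq> normal_word a' b' c'"
    using exists_normal_word[OF assms(1,2)] by blast
  have "heis_cong M N L (word_eval (normal_word a b c)) (word_eval (normal_word a' b' c'))"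
    using heis_cong_sym[OF heis_eq_imp_heis_cong[OF assms(3,4) u]] assms(5)
      heis_eq_imp_heis_cong[OF assms(3,4) v]
    by (blast intro: heis_cong_trans)
  then have "normal_word (a mod N) (b mod M) (c mod L) = normal_word (a' mod N) (b' mod M) (c' mod L)"
    unfolding word_eval_normal_word heis_cong.simps cong_int_iff by (simp add: cong_def)
  moreover have "u \<doteq> normal_word (a mod N) (b mod M) (c mod L)"
    using u normal_word_equiv_mod by (rule heis_eq.trans)
  moreover have "v \<doteq> normal_word (a' mod N) (b' mod M) (c' mod L)"
    using v normal_word_equiv_mod by (rule heis_eq.trans)
  ultimately show ?thesis
    by (metis heis_eq.sym heis_eq.trans)
qed

lemma heis_eq_iff_heis_cong:
  assumes "M \<ge> 1" "N \<ge> 1" "L dvd M" "L dvd N"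
  shows "u \<doteq> v \<longleftrightarrow> heis_cong M N L (word_eval u) (word_eval v)"
  using heis_eq_imp_heis_cong heis_cong_imp_heis_eq assms by blast

lemma heis_class_eq_iff: "heis_class M N L u = heis_class M N L v \<longleftrightarrow> u \<doteq> v"
proof
  assume "heis_class M N L u = heis_class M N L v"
  moreover have "v \<in> heis_class M N L v"
    by (simp add: heis_class_def heis_eq.refl)
  ultimately show "u \<doteq> v"
    unfolding heis_class_def by blast
next
  assume "u \<doteq> v"
  then show "heis_class M N L u = heis_class M N L v"
    unfolding heis_class_def by (blast intro: heis_eq.trans heis_eq.sym)
qed

lemma heis_group_mult_class:
  "heis_class M N L u \<otimes>\<^bsub>heis_group M N L\<^esub> heis_class M N L v = heis_class M N L (u @ v)"
proof -
  have "heis_class M N L (u' @ v') = heis_class M N L (u @ v)"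
    if "u' \<in> heis_class M N L u" "v' \<in> heis_class M N L v" for u' v'
  proof -
    have "u @ v \<doteq> u' @ v'"
      using that by (simp add: heis_class_def heis_eq_append)
    then show ?thesis
      by (simp only: heis_class_eq_iff) (rule heis_eq.sym)
  qed
  moreover have "u \<in> heis_class M N L u" "v \<in> heis_class M N L v"
    by (simp_all add: heis_class_def heis_eq.refl)
  ultimately have "(\<Union>u'\<in>heis_class M N L u. \<Union>v'\<in>heis_class M N L v. heis_class M N L (u' @ v'))
      = heis_class M N L (u @ v)"
    by blast
  then show ?thesis
    by (simp add: heis_group_def)
qed

lemma heis_group_pow_class:
  "heis_class M N L w [^]\<^bsub>heis_group M N L\<^esub> (n :: nat) = heis_class M N L (wpow w n)"
proof (induction n)
  case 0
  show ?case by (simp add: heis_group_def)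
next
  case (Suc n)
  then show ?case by (simp add: heis_group_mult_class wpow_Suc_right)
qed

lemma heis_group_pow_eq_one_iff:
  "(\<forall>g \<in> carrier (heis_group M N L). g [^]\<^bsub>heis_group M N L\<^esub> n = \<one>\<^bsub>heis_group M N L\<^esub>)
    \<longleftrightarrow> (\<forall>w. wpow w n \<doteq> [])"
proof -
  have "carrier (heis_group M N L) = range (heis_class M N L)"
    and "\<one>\<^bsub>heis_group M N L\<^esub> = heis_class M N L []"
    by (simp_all add: heis_group_def)
  then show ?thesis
    by (simp add: heis_group_pow_class heis_class_eq_iff)
qed

end

section \<open>The exponent\<close>

lemma dvd_choose_two_iff:
  fixes L T :: nat
  assumes "L dvd T"
  shows "L dvd T choose 2 \<longleftrightarrow> odd T \<or> even (T div L)"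
proof (cases "L = 0")
  case True
  with assms show ?thesis by simp
next
  case False
  from assms obtain k where T: "T = L * k" ..
  with False have k: "T div L = k"
    by simp
  consider "odd T" | "even T" "even k" | "even T" "odd k"
    by blast
  then show ?thesis
  proof cases
    case 1
    then have "T choose 2 = T * ((T - 1) div 2)"
      by (simp add: choose_two div_mult_swap)
    with assms 1 show ?thesis by simp
  next
    case 2
    then obtain j where "k = 2 * j"
      by blast
    then have "T choose 2 = L * (j * (T - 1))"
      by (simp add: choose_two T mult.assoc mult.left_commute)
    with 2 k show ?thesis by simp
  next
    case 3
    with T have "even L"
      by simp
    then obtain h where h: "L = 2 * h"
      by blast
    have "T choose 2 = h * (k * (T - 1))"
      by (simp add: choose_two T h mult.assoc mult.left_commute)
    moreover have "odd (k * (T - 1))"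
      using 3 False T odd_pos[of k] by (cases T) auto
    moreover have "0 < h"
      using False h by simp
    ultimately have "\<not> L dvd T choose 2"
      by (simp add: h)
    with 3 k show ?thesis by simp
  qed
qed

lemma dvd_double_choose_two: "L dvd T \<Longrightarrow> L dvd (2 * T) choose 2"
  by (simp add: choose_two)

lemma Least_multiple_dvd_choose_two:
  fixes L T :: nat
  assumes "L dvd T" "0 < T"
  shows "(LEAST n. 0 < n \<and> T dvd n \<and> L dvd n choose 2)
    = (if odd T \<or> even (T div L) then T else 2 * T)"
proof (cases "odd T \<or> even (T div L)")
  case True
  have "(LEAST n. 0 < n \<and> T dvd n \<and> L dvd n choose 2) = T"
    by (rule Least_equality) (use True assms dvd_choose_two_iff in \<open>auto intro: dvd_imp_le\<close>)
  with True show ?thesis by simp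
next
  case False
  have "(LEAST n. 0 < n \<and> T dvd n \<and> L dvd n choose 2) = 2 * T"
  proof (rule Least_equality)
    show "0 < 2 * T \<and> T dvd 2 * T \<and> L dvd (2 * T) choose 2"
      using assms dvd_double_choose_two by simp
  next
    fix n
    assume n: "0 < n \<and> T dvd n \<and> L dvd n choose 2"
    then obtain m where m: "n = T * m"
      by blast
    have "m \<noteq> 0" "m \<noteq> 1"
      using n m False dvd_choose_two_iff[OF assms(1)] by auto
    then show "2 * T \<le> n"
      using m by simp
  qed
  with False show ?thesis by simp
qed

lemma exponent_heis_group:
  assumes "M \<ge> 1" "N \<ge> 1" "L dvd M" "L dvd N"
  shows "exponent (heis_group M N L)
    = (if odd (lcm M N) \<or> even (lcm M N div L) then lcm M N else 2 * lcm M N)"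
proof -
  have "exponent (heis_group M N L) = (LEAST n. 0 < n \<and> lcm M N dvd n \<and> L dvd n choose 2)"
    unfolding exponent_def heis_group_pow_eq_one_iff heis_eq_iff_heis_cong[OF assms]
      word_eval.simps(1) all_wpow_heis_cong_0_iff[OF assms(4)] ..
  also have "\<dots> = (if odd (lcm M N) \<or> even (lcm M N div L) then lcm M N else 2 * lcm M N)"
    using assms by (intro Least_multiple_dvd_choose_two) (auto intro: dvd_trans simp: lcm_pos_nat)
  finally show ?thesis .
qed

theorem proposition4:
  "(\<forall>M N L :: nat. M \<ge> 1 \<longrightarrow> N \<ge> 1 \<longrightarrow> L dvd M \<longrightarrow> L dvd N \<longrightarrow>
      exponent (heis_group M N L) =
        (if odd (lcm M N) \<or> even (lcm M N div L) then lcm M N else 2 * lcm M N))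
   \<and> (\<forall>N :: nat. N \<ge> 1 \<longrightarrow> odd N \<longrightarrow> exponent (heis_group N N N) = N)
   \<and> (\<forall>N :: nat. N \<ge> 1 \<longrightarrow> even N \<longrightarrow> exponent (heis_group N N (N div 2)) = N)"
proof (intro conjI allI impI)
  fix M N L :: nat
  assume "M \<ge> 1" "N \<ge> 1" "L dvd M" "L dvd N"
  then show "exponent (heis_group M N L)
      = (if odd (lcm M N) \<or> even (lcm M N div L) then lcm M N else 2 * lcm M N)"
    by (rule exponent_heis_group)
next
  fix N :: nat
  assume "N \<ge> 1" "odd N"
  then show "exponent (heis_group N N N) = N"
    using exponent_heis_group[of N N N] by simp
next
  fix N :: nat
  assume N: "N \<ge> 1" "even N"
  then have "N div 2 dvd N" "N div (N div 2) = 2"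
    by (auto elim!: evenE)
  with N show "exponent (heis_group N N (N div 2)) = N"
    using exponent_heis_group[of N N "N div 2"] by simp
qed

end
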